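(* Let $(X,b,m)$ be a weighted graph satisfying (C), (B), (M), let $D\subseteq X$, $T>0$, $r\in[1,\infty)$, $K\ge0$, $\alpha\in[0,e^{-D_{\max}T})$, and assume the linear control problem $(H,D)$ is $(\alpha,T,r,K)$-controllable. Then $D$ is $d_{\mathrm{comb}}$-relatively dense.
   Context: Weighted graph $(X,b,m)$: $X$ countable, $m\colon X\to(0,\infty)$, $b\colon X\times X\to[0,\infty)$ symmetric, $b(x,x)=0$, $\sum_yb(x,y)<\infty$. Paths are sequences $(x_0,\dots,x_k)$ with $b(x_j,x_{j+1})>0$. (C) connected; (B) $D_{\max}:=\sup_x\operatorname{Deg}(x)<\infty$, $\operatorname{Deg}(x)=\frac1{m(x)}\sum_yb(x,y)$; (M) $\sup_xm(x)<\infty$. Combinatorial metric $d_{\mathrm{comb}}(x,y)$: minimal $n$ such that a path $(x_0,\dots,x_n)$ from $x$ to $y$ exists ($0$ if $x=y$). $D$ is $d_{\mathrm{comb}}$-relatively dense if $\inf\{R>0:\bigcup_{x\in D}\{y:d_{\mathrm{comb}}(x,y)\le R\}=X\}<\infty$. $H$ is the weighted Laplacian $Hf(x)=\frac1{m(x)}\sum_yb(x,y)(f(x)-f(y))$ on $\ell_2(X,m)$, $S_t=e^{-tH}$. The control problem $(H,D)$: $\dot f=-Hf+\mathbf 1_Du$, $f(0)=f_0$, $\mathbf 1_D$ extension by zero, mild solution $f(t)=S_tf_0+\int_0^tS_{t-\tau}\mathbf 1_Du(\tau)d\tau$; $(\alpha,T,r,K)$-controllable means for all $f_0\in\ell_2(X,m)$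 there is $u\in L_r((0,T);\ell_2(D,m|_D))$ with $\|u\|_{L_r}\le K\|f_0\|$ and $\|f(T)\|\le\alpha\|f_0\|$. *)

theory Defs
  imports "HOL-Analysis.Analysis"
begin

definition weighted_graph :: "('a::countable \<Rightarrow> 'a \<Rightarrow> real) \<Rightarrow> ('a \<Rightarrow> real) \<Rightarrow> bool" where
  "weighted_graph b m \<longleftrightarrow>
     (\<forall>x. m x > 0) \<and> (\<forall>x y. b x y \<ge> 0) \<and> (\<forall>x y. b x y = b y x) \<and>
     (\<forall>x. b x x = 0) \<and> (\<forall>x. (\<lambda>y. b x y) summable_on UNIV)"

definition graph_path :: "('a \<Rightarrow> 'a \<Rightarrow> real) \<Rightarrow> 'a \<Rightarrow> 'a \<Rightarrow> nat \<Rightarrow> bool" where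
  "graph_path b x y n \<longleftrightarrow>
     (\<exists>p::nat \<Rightarrow> 'a. p 0 = x \<and> p n = y \<and> (\<forall>i<n. b (p i) (p (Suc i)) > 0))"

definition graph_connected :: "('a \<Rightarrow> 'a \<Rightarrow> real) \<Rightarrow> bool" where
  "graph_connected b \<longleftrightarrow> (\<forall>x y. \<exists>n. graph_path b x y n)"

definition Deg :: "('a \<Rightarrow> 'a \<Rightarrow> real) \<Rightarrow> ('a \<Rightarrow> real) \<Rightarrow> 'a \<Rightarrow> real" where
  "Deg b m x = infsum (\<lambda>y. b x y) UNIV / m x"

definition D_max :: "('a \<Rightarrow> 'a \<Rightarrow> real) \<Rightarrow> ('a \<Rightarrow> real) \<Rightarrow> real" where
  "D_max b m = (SUP x. Deg b m x)"

definition bounded_degree :: "('a \<Rightarrow> 'a \<Rightarrow> real) \<Rightarrow> ('a \<Rightarrow> real) \<Rightarrow> bool" where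
  "bounded_degree b m \<longleftrightarrow> bdd_above (range (Deg b m))"

definition bounded_measure :: "('a \<Rightarrow> real) \<Rightarrow> bool" where
  "bounded_measure m \<longleftrightarrow> bdd_above (range m)"

definition d_comb :: "('a \<Rightarrow> 'a \<Rightarrow> real) \<Rightarrow> 'a \<Rightarrow> 'a \<Rightarrow> nat" where
  "d_comb b x y = (LEAST n. graph_path b x y n)"

definition comb_rel_dense :: "('a \<Rightarrow> 'a \<Rightarrow> real) \<Rightarrow> 'a set \<Rightarrow> bool" where
  "comb_rel_dense b D \<longleftrightarrow>
     (\<exists>R::real. R > 0 \<and> (\<Union>x\<in>D. {y. real (d_comb b x y) \<le> R}) = UNIV)"

text \<open>The space ell_2(A, m|_A) (functions are considered on A only) and its norm.\<close>
definition in_l2 :: "('a \<Rightarrow> real) \<Rightarrow> 'a set \<Rightarrow> ('a \<Rightarrow> real) \<Rightarrow> bool" where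
  "in_l2 m A f \<longleftrightarrow> (\<lambda>x. (f x)\<^sup>2 * m x) summable_on A"

definition l2_norm :: "('a \<Rightarrow> real) \<Rightarrow> 'a set \<Rightarrow> ('a \<Rightarrow> real) \<Rightarrow> real" where
  "l2_norm m A f = sqrt (infsum (\<lambda>x. (f x)\<^sup>2 * m x) A)"

definition laplacian :: "('a \<Rightarrow> 'a \<Rightarrow> real) \<Rightarrow> ('a \<Rightarrow> real) \<Rightarrow> ('a \<Rightarrow> real) \<Rightarrow> ('a \<Rightarrow> real)" where
  "laplacian b m f = (\<lambda>x. infsum (\<lambda>y. b x y * (f x - f y)) UNIV / m x)"

text \<open>Semigroup S_t = exp(-tH). Under (B) the operator H is bounded on ell_2(X,m), so
  exp(-tH) is given by the exponential series, which converges in ell_2 and hence pointwise.\<close>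
definition semigroup :: "('a \<Rightarrow> 'a \<Rightarrow> real) \<Rightarrow> ('a \<Rightarrow> real) \<Rightarrow> real \<Rightarrow> ('a \<Rightarrow> real) \<Rightarrow> ('a \<Rightarrow> real)" where
  "semigroup b m t f = (\<lambda>x. \<Sum>n. (-t) ^ n / fact n * ((laplacian b m ^^ n) f) x)"

definition ext_zero :: "'a set \<Rightarrow> ('a \<Rightarrow> real) \<Rightarrow> ('a \<Rightarrow> real)" where
  "ext_zero D g = (\<lambda>x. if x \<in> D then g x else 0)"

text \<open>Mild solution at time t (evaluated pointwise; the ell_2-valued Bochner integral
  evaluated at x equals the scalar integral since point evaluations are continuous).\<close>
definition mild_solution ::
  "('a \<Rightarrow> 'a \<Rightarrow> real) \<Rightarrow> ('a \<Rightarrow> real) \<Rightarrow> 'a set \<Rightarrow> ('a \<Rightarrow> real) \<Rightarrow> (real \<Rightarrow> 'a \<Rightarrow> real) \<Rightarrow> real \<Rightarrow> ('a \<Rightarrow> real)" where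
  "mild_solution b m D f0 u t = (\<lambda>x. semigroup b m t f0 x +
      (LINT \<tau>:{0<..<t}|lborel. semigroup b m (t - \<tau>) (ext_zero D (u \<tau>)) x))"

text \<open>Strong measurability of an
  ell_2(D)-valued function is (Pettis, ell_2 separable) measurability of all coordinates.
  Representatives are taken with values in ell_2(D) everywhere on (0,T) (w.l.o.g.).\<close>
definition Lr_control ::
  "('a \<Rightarrow> real) \<Rightarrow> 'a set \<Rightarrow> real \<Rightarrow> real \<Rightarrow> (real \<Rightarrow> 'a \<Rightarrow> real) \<Rightarrow> real \<Rightarrow> bool" where
  "Lr_control m D T r u C \<longleftrightarrow>
     (\<forall>x\<in>D. (\<lambda>\<tau>. u \<tau> x) \<in> borel_measurable (restrict_space lborel {0<..<T})) \<and>
     (\<forall>\<tau>\<in>{0<..<T}. in_l2 m D (u \<tau>)) \<and>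
     set_integrable lborel {0<..<T} (\<lambda>\<tau>. l2_norm m D (u \<tau>) powr r) \<and>
     (LINT \<tau>:{0<..<T}|lborel. l2_norm m D (u \<tau>) powr r) powr (1 / r) \<le> C"

definition controllable ::
  "('a \<Rightarrow> 'a \<Rightarrow> real) \<Rightarrow> ('a \<Rightarrow> real) \<Rightarrow> 'a set \<Rightarrow> real \<Rightarrow> real \<Rightarrow> real \<Rightarrow> real \<Rightarrow> bool" where
  "controllable b m D \<alpha> T r K \<longleftrightarrow>
     (\<forall>f0. in_l2 m UNIV f0 \<longrightarrow>
        (\<exists>u. Lr_control m D T r u (K * l2_norm m UNIV f0) \<and>
             l2_norm m UNIV (mild_solution b m D f0 u T) \<le> \<alpha> * l2_norm m UNIV f0))"

end

theory Submission
  imports Defs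
begin

text \<open>Under (B) the Laplacian \<open>H\<close> is bounded on \<open>\<ell>\<^sub>2(X,m)\<close> with norm at most
  \<open>2 D_max\<close>, and \<open>(H^n f)(x)\<close> only depends on \<open>f\<close> within combinatorial distance \<open>n\<close>
  of \<open>x\<close>. So the exponential series of \<open>S_t\<close> converges, and a source supported at
  distance \<open>> n\<close> from \<open>x\<close> reaches \<open>x\<close> only through the tail of this series beyond
  order \<open>n\<close>. Writing \<open>H = D_max - P\<close> with a positivity preserving \<open>P\<close> gives
  \<open>S_t f \<ge> exp(-t D_max) f\<close> for \<open>f \<ge> 0\<close>. If \<open>D\<close> were not relatively dense, start
  from the normalised point mass at a vertex \<open>x\<close> far from \<open>D\<close>: the free evolution keeps
  at least \<open>exp(-T D_max) / sqrt(m x)\<close> at \<open>x\<close>, whereas a control of size \<open>K\<close> changes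
  the value at \<open>x\<close> by at most the tail times \<open>(T + K^r) / sqrt(m x)\<close>. Then the final
  state has norm \<open>> \<alpha>\<close>.\<close>

lemma sq_le_mult_if_quadratic_bound:
  fixes a s w :: real
  assumes "0 \<le> a" "0 \<le> s" "0 \<le> w" and bound: "\<And>e. e > 0 \<Longrightarrow> 2 * a * e \<le> e\<^sup>2 * s + w"
  shows "a\<^sup>2 \<le> s * w"
proof (cases "a = 0")
  case False
  then have a: "a > 0" using assms by simp
  show ?thesis
  proof (cases "s = 0")
    case True
    have "2 * a * ((w + 1) / (2 * a)) \<le> w" using bound[of "(w + 1) / (2 * a)"] a assms True by simp
    then show ?thesis using a by simp
  next
    case False
    then have s: "s > 0" using assms by simp
    have "2 * a * (a / s) \<le> (a / s)\<^sup>2 * s + w" using bound[of "a / s"] a s by simp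
    then have "a\<^sup>2 / s \<le> w" using s by (simp add: power2_eq_square field_simps)
    then show ?thesis using s by (simp add: pos_divide_le_eq mult.commute)
  qed
qed (use assms in simp)

lemma finite_sums_le_imp_summable_on:
  fixes g :: "'b \<Rightarrow> real"
  assumes "\<And>x. 0 \<le> g x" and "\<And>F. finite F \<Longrightarrow> sum g F \<le> C"
  shows "g summable_on UNIV" and "infsum g UNIV \<le> C"
proof -
  show g: "g summable_on UNIV"
    by (rule nonneg_bdd_above_summable_on) (use assms in \<open>auto intro!: bdd_aboveI2\<close>)
  show "infsum g UNIV \<le> C"
    by (rule infsum_le_finite_sums[OF g]) (use assms in auto)
qed

lemma has_sum_finite_sum:
  fixes g :: "'c \<Rightarrow> 'b \<Rightarrow> 'd::topological_comm_monoid_add"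
  assumes "finite F" and "\<And>x. x \<in> F \<Longrightarrow> (g x has_sum s x) A"
  shows "((\<lambda>y. \<Sum>x\<in>F. g x y) has_sum (\<Sum>x\<in>F. s x)) A"
  using assms by (induction F rule: finite_induct) (auto intro: has_sum_add)

lemma L2_set_le_if_pairings_le:
  fixes v :: "'b \<Rightarrow> real"
  assumes "0 \<le> C" and pairing: "\<And>w. L2_set w F \<le> 1 \<Longrightarrow> (\<Sum>y\<in>F. w y * v y) \<le> C"
  shows "L2_set v F \<le> C"
proof (cases "L2_set v F = 0")
  case False
  define L where "L = L2_set v F"
  have L: "L > 0" using False L2_set_nonneg[of v F] unfolding L_def by linarith
  have "L2_set (\<lambda>y. (1 / L) * v y) F = (1 / L) * L"
    unfolding L_def by (rule L2_set_right_distrib[symmetric]) (use L in simp)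
  then have "L2_set (\<lambda>y. (1 / L) * v y) F \<le> 1" using L by simp
  moreover have "(\<Sum>y\<in>F. (1 / L) * v y * v y) = L"
  proof -
    have "(\<Sum>y\<in>F. (1 / L) * v y * v y) = (1 / L) * (L2_set v F)\<^sup>2"
      by (simp add: L2_set_def sum_nonneg sum_distrib_left power2_eq_square mult.assoc)
    then show ?thesis using L unfolding L_def by (simp add: power2_eq_square)
  qed
  ultimately show ?thesis using pairing unfolding L_def by fastforce
qed (use assms in simp)

lemma set_integral_le_measure_plus_powr:
  fixes \<nu> :: "real \<Rightarrow> real"
  assumes A: "A \<in> sets lborel" "emeasure lborel A < \<infinity>" and r: "1 \<le> r"
    and nonneg: "\<And>\<tau>. 0 \<le> \<nu> \<tau>" and int_powr: "set_integrable lborel A (\<lambda>\<tau>. \<nu> \<tau> powr r)"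
  shows "set_integrable lborel A \<nu>"
    and "(LINT \<tau>:A|lborel. \<nu> \<tau>) \<le> measure lborel A + (LINT \<tau>:A|lborel. \<nu> \<tau> powr r)"
proof -
  have i1: "integrable lborel (\<lambda>\<tau>. indicator A \<tau> * \<nu> \<tau> powr r)"
    using int_powr unfolding set_integrable_def by simp
  have i0: "integrable lborel (\<lambda>\<tau>. indicator A \<tau> :: real)"
    using A by (intro integrable_real_indicator) auto
  have "(\<lambda>\<tau>. indicator A \<tau> * \<nu> \<tau>) = (\<lambda>\<tau>. (indicator A \<tau> * \<nu> \<tau> powr r) powr (1 / r))"
    using r nonneg by (auto simp: indicator_def powr_powr)
  then have meas: "(\<lambda>\<tau>. indicator A \<tau> * \<nu> \<tau>) \<in> borel_measurable lborel"
    using borel_measurable_integrable[OF i1] by simp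
  have pt: "indicator A \<tau> * \<nu> \<tau> \<le> indicator A \<tau> + indicator A \<tau> * \<nu> \<tau> powr r" for \<tau>
  proof -
    have "\<nu> \<tau> \<le> 1 + \<nu> \<tau> powr r"
    proof (cases "\<nu> \<tau> \<le> 1")
      case False
      then have "\<nu> \<tau> powr 1 \<le> \<nu> \<tau> powr r" using r by (intro powr_mono) auto
      then show ?thesis using nonneg[of \<tau>] by simp
    qed (simp add: add_increasing2)
    then show ?thesis by (simp add: indicator_def)
  qed
  have i2: "integrable lborel (\<lambda>\<tau>. indicator A \<tau> + indicator A \<tau> * \<nu> \<tau> powr r)"
    using i0 i1 by (rule Bochner_Integration.integrable_add)
  have i3: "integrable lborel (\<lambda>\<tau>. indicator A \<tau> * \<nu> \<tau>)"
    by (rule Bochner_Integration.integrable_bound[OF i2 meas])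
       (use pt nonneg in \<open>auto intro!: AE_I2 simp: indicator_def\<close>)
  then show "set_integrable lborel A \<nu>" unfolding set_integrable_def by simp
  have "integral\<^sup>L lborel (\<lambda>\<tau>. indicator A \<tau> * \<nu> \<tau>)
      \<le> integral\<^sup>L lborel (\<lambda>\<tau>. indicator A \<tau> + indicator A \<tau> * \<nu> \<tau> powr r)"
    by (rule integral_mono[OF i3 i2 pt])
  also have "\<dots> = measure lborel A + integral\<^sup>L lborel (\<lambda>\<tau>. indicator A \<tau> * \<nu> \<tau> powr r)"
    using A by (simp add: Bochner_Integration.integral_add[OF i0 i1])
  finally show "(LINT \<tau>:A|lborel. \<nu> \<tau>) \<le> measure lborel A + (LINT \<tau>:A|lborel. \<nu> \<tau> powr r)"
    unfolding set_lebesgue_integral_def by simp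
qed

lemma Lr_control_norm_integral_le:
  assumes u: "Lr_control m D T r u C" and "0 < T" and r: "1 \<le> r"
    and m: "\<And>x. x \<in> D \<Longrightarrow> 0 \<le> m x"
  shows "set_integrable lborel {0<..<T} (\<lambda>\<tau>. l2_norm m D (u \<tau>))"
    and "(LINT \<tau>:{0<..<T}|lborel. l2_norm m D (u \<tau>)) \<le> T + C powr r"
proof -
  let ?\<nu> = "\<lambda>\<tau>. l2_norm m D (u \<tau>)"
  have nonneg: "0 \<le> ?\<nu> \<tau>" for \<tau>
    unfolding l2_norm_def by (intro real_sqrt_ge_zero infsum_nonneg) (simp add: m)
  have int_powr: "set_integrable lborel {0<..<T} (\<lambda>\<tau>. ?\<nu> \<tau> powr r)"
    and bound: "(LINT \<tau>:{0<..<T}|lborel. ?\<nu> \<tau> powr r) powr (1 / r) \<le> C"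
    using u unfolding Lr_control_def by auto
  have "emeasure lborel {0<..<T} < \<infinity>" using \<open>0 < T\<close> by simp
  note \<nu>_int = set_integral_le_measure_plus_powr[OF _ this r nonneg int_powr, simplified]
  show "set_integrable lborel {0<..<T} ?\<nu>" using \<nu>_int(1) by simp
  define X where "X = (LINT \<tau>:{0<..<T}|lborel. ?\<nu> \<tau> powr r)"
  have "0 \<le> X" unfolding X_def set_lebesgue_integral_def
    by (rule Bochner_Integration.integral_nonneg) (simp add: indicator_def)
  then have "X = (X powr (1 / r)) powr r" using r by (simp add: powr_powr)
  also have "\<dots> \<le> C powr r" using bound r unfolding X_def by (intro powr_mono2) auto
  finally show "(LINT \<tau>:{0<..<T}|lborel. ?\<nu> \<tau>) \<le> T + C powr r"
    using \<nu>_int(2) \<open>0 < T\<close> unfolding X_def by simp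
qed

lemma sum_integral_le_integral:
  fixes f :: "'b \<Rightarrow> 'c \<Rightarrow> real"
  assumes F: "finite F" and h: "integrable M h" and bound: "\<And>G x. G \<subseteq> F \<Longrightarrow> (\<Sum>y\<in>G. f y x) \<le> h x"
  shows "(\<Sum>y\<in>F. integral\<^sup>L M (f y)) \<le> integral\<^sup>L M h"
proof -
  \<comment> \<open>The non-integrable summands contribute the junk value \<open>0\<close>.\<close>
  define G where "G = {y \<in> F. integrable M (f y)}"
  have G: "finite G" "G \<subseteq> F" using F by (auto simp: G_def)
  have "(\<Sum>y\<in>F. integral\<^sup>L M (f y)) = (\<Sum>y\<in>G. integral\<^sup>L M (f y))"
    by (rule sum.mono_neutral_right[OF F G(2)]) (auto simp: G_def not_integrable_integral_eq)
  also have "\<dots> = integral\<^sup>L M (\<lambda>x. \<Sum>y\<in>G. f y x)"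
    by (rule Bochner_Integration.integral_sum[symmetric]) (auto simp: G_def)
  also have "\<dots> \<le> integral\<^sup>L M h"
  proof (rule integral_mono)
    show "integrable M (\<lambda>x. \<Sum>y\<in>G. f y x)" by (auto simp: G_def)
  qed (use h bound[OF G(2)] in auto)
  finally show ?thesis .
qed

lemma pascal_sum_shift:
  fixes d :: real and v :: "nat \<Rightarrow> real"
  shows "(\<Sum>k\<le>n. real (n choose k) * d ^ (n - k) * (-1) ^ k * (d * v k - v (Suc k)))
       = (\<Sum>k\<le>Suc n. real (Suc n choose k) * d ^ (Suc n - k) * (-1) ^ k * v k)"
proof -
  let ?a = "\<lambda>k. real (n choose k) * d ^ (Suc n - k) * (-1) ^ k * v k"
  let ?b = "\<lambda>j. real (n choose j) * d ^ (n - j) * (-1) ^ j * v (Suc j)"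
  let ?c = "\<lambda>j. real (n choose Suc j) * d ^ (n - j) * (-1) ^ Suc j * v (Suc j)"
  have "(\<Sum>k\<le>n. real (n choose k) * d ^ (n - k) * (-1) ^ k * (d * v k - v (Suc k)))
      = (\<Sum>k\<le>n. ?a k) - (\<Sum>j\<le>n. ?b j)"
    by (simp add: Suc_diff_le algebra_simps flip: sum_subtractf)
  also have "(\<Sum>k\<le>n. ?a k) = (\<Sum>k\<le>Suc n. ?a k)"
    by (simp add: sum.atMost_Suc)
  also have "\<dots> = d ^ Suc n * v 0 + (\<Sum>j\<le>n. ?c j)"
    by (subst sum.atMost_Suc_shift) simp
  finally have lhs: "(\<Sum>k\<le>n. real (n choose k) * d ^ (n - k) * (-1) ^ k * (d * v k - v (Suc k)))
      = d ^ Suc n * v 0 + (\<Sum>j\<le>n. ?c j) - (\<Sum>j\<le>n. ?b j)" .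
  have rhs: "(\<Sum>k\<le>Suc n. real (Suc n choose k) * d ^ (Suc n - k) * (-1) ^ k * v k)
      = d ^ Suc n * v 0 + (\<Sum>j\<le>n. ?c j - ?b j)"
    by (subst sum.atMost_Suc_shift) (simp add: ring_distribs, intro sum.cong refl, linarith)
  show ?thesis unfolding lhs rhs by (simp only: sum_subtractf add_diff_eq)
qed

lemma exp_series_binomial_term:
  fixes t d q :: real
  assumes "k \<le> n"
  shows "(-t) ^ n / fact n * (real (n choose k) * d ^ (n - k) * (-1) ^ k * q)
       = (t ^ k / fact k * q) * ((- t * d) ^ (n - k) / fact (n - k))"
proof -
  have split: "(-t) ^ n = (-t) ^ k * (-t) ^ (n - k)" using assms by (simp flip: power_add)
  have "(-t) ^ n * (-1) ^ k * d ^ (n - k) = ((-t) ^ k * (-1) ^ k) * ((-t) ^ (n - k) * d ^ (n - k))"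
    unfolding split by (simp only: mult_ac)
  also have "\<dots> = t ^ k * (- t * d) ^ (n - k)"
    by (simp only: power_mult_distrib[symmetric]) simp
  finally have "(-t) ^ n * (-1) ^ k * d ^ (n - k) = t ^ k * (- t * d) ^ (n - k)" .
  then show ?thesis using assms by (simp add: binomial_fact field_simps)
qed

lemma exp_sums_real: "(\<lambda>n. x ^ n / fact n) sums exp (x :: real)"
  using exp_converges[of x] by (simp add: divide_inverse mult.commute)

lemma summable_exp_series_real: "summable (\<lambda>n. (x :: real) ^ n / fact n)"
  using exp_sums_real by (rule sums_summable)

definition exp_tail :: "real \<Rightarrow> nat \<Rightarrow> real" where
  "exp_tail c n = (\<Sum>k. c ^ (k + n) / fact (k + n))"

lemma exp_tail_nonneg: "0 \<le> c \<Longrightarrow> 0 \<le> exp_tail c n"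
  unfolding exp_tail_def
  by (intro suminf_nonneg summable_ignore_initial_segment[OF summable_exp_series_real]) simp

lemma exp_tail_tendsto_zero: "exp_tail c \<longlonglongrightarrow> 0"
proof -
  have "exp_tail c = (\<lambda>n. exp c - (\<Sum>i<n. c ^ i / fact i))"
    unfolding exp_tail_def
    by (simp add: suminf_minus_initial_segment[OF summable_exp_series_real]
        sums_unique[OF exp_sums_real, symmetric])
  moreover have "(\<lambda>n. \<Sum>i<n. c ^ i / fact i) \<longlonglongrightarrow> exp c"
    using exp_sums_real unfolding sums_def .
  then have "(\<lambda>n. exp c - (\<Sum>i<n. c ^ i / fact i)) \<longlonglongrightarrow> exp c - exp c"
    by (intro tendsto_diff tendsto_const)
  ultimately show ?thesis by simp
qed

section \<open>Paths and the combinatorial metric\<close>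

lemma graph_path_snoc:
  assumes "graph_path b x y k" and "b y z > 0"
  shows "graph_path b x z (Suc k)"
proof -
  obtain p where p: "p 0 = x" "p k = y" "\<forall>i<k. b (p i) (p (Suc i)) > 0"
    using assms(1) unfolding graph_path_def by blast
  have "\<forall>i<Suc k. b ((p(Suc k := z)) i) ((p(Suc k := z)) (Suc i)) > 0"
    using p assms(2) by (auto simp: less_Suc_eq)
  then show ?thesis using p unfolding graph_path_def by (intro exI[of _ "p(Suc k := z)"]) auto
qed

lemma graph_path_sym:
  assumes sym: "\<And>x y. b x y = b y x" and "graph_path b x y k"
  shows "graph_path b y x k"
proof -
  obtain p where p: "p 0 = x" "p k = y" "\<forall>i<k. b (p i) (p (Suc i)) > 0"
    using assms(2) unfolding graph_path_def by blast
  have "b (p (k - i)) (p (k - Suc i)) > 0" if "i < k" for i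
  proof -
    have "k - i = Suc (k - Suc i)" using that by simp
    moreover have "b (p (k - Suc i)) (p (Suc (k - Suc i))) > 0" using p(3) that by simp
    ultimately show ?thesis by (metis sym)
  qed
  then show ?thesis using p unfolding graph_path_def by (intro exI[of _ "\<lambda>i. p (k - i)"]) auto
qed

lemma d_comb_le: "graph_path b x y k \<Longrightarrow> d_comb b x y \<le> k"
  unfolding d_comb_def by (rule Least_le)

lemma not_comb_rel_dense_imp_far_vertex:
  assumes "\<not> comb_rel_dense b D"
  obtains x where "\<And>y. y \<in> D \<Longrightarrow> n < d_comb b y x"
proof -
  have "(\<Union>y\<in>D. {z. real (d_comb b y z) \<le> real n + 1}) \<noteq> UNIV"
    using assms unfolding comb_rel_dense_def by (metis add_nonneg_pos of_nat_0_le_iff zero_less_one)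
  then obtain x where "\<And>y. y \<in> D \<Longrightarrow> \<not> real (d_comb b y x) \<le> real n + 1" by blast
  then have "n < d_comb b y x" if "y \<in> D" for y
    using that by (metis add_increasing2 linorder_not_less of_nat_le_iff zero_le_one)
  then show ?thesis using that by blast
qed

section \<open>The Laplacian on \<open>\<ell>\<^sub>2(X,m)\<close>\<close>

locale bounded_weighted_graph =
  fixes b :: "'a::countable \<Rightarrow> 'a \<Rightarrow> real" and m :: "'a \<Rightarrow> real"
  assumes weighted_graph: "weighted_graph b m" and bounded_degree: "bounded_degree b m"
begin

abbreviation "H \<equiv> laplacian b m"
abbreviation "Dmax \<equiv> D_max b m"
abbreviation "l2 \<equiv> in_l2 m UNIV"

definition sq_norm :: "('a \<Rightarrow> real) \<Rightarrow> real" where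
  "sq_norm f = infsum (\<lambda>x. (f x)\<^sup>2 * m x) UNIV"

definition deg :: "'a \<Rightarrow> real" where
  "deg x = infsum (b x) UNIV"

definition adj :: "('a \<Rightarrow> real) \<Rightarrow> 'a \<Rightarrow> real" where
  "adj f x = infsum (\<lambda>y. b x y * f y) UNIV"

lemma m_pos: "0 < m x"
  and b_nonneg: "0 \<le> b x y"
  and b_sym: "b x y = b y x"
  and b_summable: "b x summable_on UNIV"
  using weighted_graph unfolding weighted_graph_def by auto

lemma deg_nonneg: "0 \<le> deg x"
  unfolding deg_def by (rule infsum_nonneg) (simp add: b_nonneg)

lemma Deg_le_Dmax: "deg x / m x \<le> Dmax"
proof -
  have "Deg b m x \<le> Dmax"
    using bounded_degree unfolding D_max_def bounded_degree_def by (intro cSUP_upper) auto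
  then show ?thesis by (simp add: Deg_def deg_def)
qed

lemma Dmax_nonneg: "0 \<le> Dmax"
  using Deg_le_Dmax[of undefined] deg_nonneg[of undefined] m_pos[of undefined]
  by (meson divide_nonneg_pos order_trans)

lemma deg_le_Dmax: "deg x \<le> Dmax * m x"
  using Deg_le_Dmax[of x] m_pos[of x] by (simp add: pos_divide_le_eq)

lemma sum_b_le_deg:
  assumes "finite F" shows "(\<Sum>y\<in>F. b y x) \<le> deg x"
proof -
  have "(\<Sum>y\<in>F. b y x) = (\<Sum>y\<in>F. b x y)" by (rule sum.cong) (auto intro: b_sym)
  also have "\<dots> \<le> deg x"
    unfolding deg_def by (rule finite_sum_le_infsum) (auto simp: assms b_summable b_nonneg)
  finally show ?thesis .
qed

lemma b_le_Dmax: "b x y \<le> Dmax * m y"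
  using sum_b_le_deg[of "{x}" y] deg_le_Dmax[of y] by simp

lemma sq_norm_nonneg: "0 \<le> sq_norm f"
  unfolding sq_norm_def by (rule infsum_nonneg) (simp add: m_pos less_imp_le)

lemma l2_norm_eq: "l2_norm m UNIV f = sqrt (sq_norm f)"
  by (simp add: l2_norm_def sq_norm_def)

lemma sum_le_sq_norm: "l2 f \<Longrightarrow> (\<Sum>x\<in>F. (f x)\<^sup>2 * m x) \<le> sq_norm f"
  unfolding sq_norm_def in_l2_def
  by (cases "finite F") (auto intro: finite_sum_le_infsum simp: m_pos less_imp_le sq_norm_nonneg[unfolded sq_norm_def])

lemma abs_mult_sqrt_le_l2_norm:
  assumes "l2 f" shows "\<bar>f x\<bar> * sqrt (m x) \<le> sqrt (sq_norm f)"
proof -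
  have "(f x)\<^sup>2 * m x \<le> sq_norm f" using sum_le_sq_norm[OF assms, of "{x}"] by simp
  then have "sqrt ((f x)\<^sup>2 * m x) \<le> sqrt (sq_norm f)" by simp
  then show ?thesis using m_pos[of x] by (simp add: real_sqrt_mult)
qed

lemma L2_set_weighted_le:
  assumes "l2 f" shows "L2_set (\<lambda>y. sqrt (m y) * f y) F \<le> sqrt (sq_norm f)"
proof -
  have "(\<Sum>y\<in>F. (sqrt (m y) * f y)\<^sup>2) = (\<Sum>y\<in>F. (f y)\<^sup>2 * m y)"
    using m_pos by (simp add: power_mult_distrib less_imp_le mult.commute)
  then show ?thesis unfolding L2_set_def using sum_le_sq_norm[OF assms, of F] by simp
qed

lemma abs_weighted_pairing_le:
  assumes "l2 f" "L2_set w F \<le> 1"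
  shows "\<bar>\<Sum>y\<in>F. w y * (sqrt (m y) * f y)\<bar> \<le> sqrt (sq_norm f)"
proof -
  have "\<bar>\<Sum>y\<in>F. w y * (sqrt (m y) * f y)\<bar> \<le> (\<Sum>y\<in>F. \<bar>w y\<bar> * \<bar>sqrt (m y) * f y\<bar>)"
    by (rule order_trans[OF sum_abs]) (simp add: abs_mult)
  also have "\<dots> \<le> L2_set w F * L2_set (\<lambda>y. sqrt (m y) * f y) F"
    by (rule L2_set_mult_ineq)
  also have "\<dots> \<le> 1 * sqrt (sq_norm f)"
    using assms L2_set_weighted_le[OF assms(1)] by (intro mult_mono) auto
  finally show ?thesis by simp
qed

lemma l2_if_L2_set_le:
  assumes "\<And>F. finite F \<Longrightarrow> L2_set (\<lambda>y. sqrt (m y) * f y) F \<le> C"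
  shows "l2 f"
proof -
  have "(\<Sum>y\<in>F. (f y)\<^sup>2 * m y) \<le> C\<^sup>2" if "finite F" for F
  proof -
    have "(\<Sum>y\<in>F. (f y)\<^sup>2 * m y) = (L2_set (\<lambda>y. sqrt (m y) * f y) F)\<^sup>2"
      using m_pos by (simp add: L2_set_def sum_nonneg power_mult_distrib less_imp_le mult.commute)
    also have "\<dots> \<le> C\<^sup>2" using assms[OF that] by (intro power_mono) auto
    finally show ?thesis .
  qed
  then show ?thesis unfolding in_l2_def
    by (intro finite_sums_le_imp_summable_on(1)) (auto simp: m_pos less_imp_le)
qed

lemma l2_add:
  assumes "l2 f" "l2 g"
  shows "l2 (\<lambda>x. f x + g x)" and "sq_norm (\<lambda>x. f x + g x) \<le> 2 * sq_norm f + 2 * sq_norm g"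
proof -
  have sum: "(\<lambda>x. 2 * ((f x)\<^sup>2 * m x) + 2 * ((g x)\<^sup>2 * m x)) summable_on UNIV"
    using assms unfolding in_l2_def by (intro summable_on_add summable_on_cmult_right)
  have pt: "(f x + g x)\<^sup>2 * m x \<le> 2 * ((f x)\<^sup>2 * m x) + 2 * ((g x)\<^sup>2 * m x)" for x
  proof -
    have "(f x + g x)\<^sup>2 \<le> 2 * (f x)\<^sup>2 + 2 * (g x)\<^sup>2"
      using zero_le_power2[of "f x - g x"] by (simp add: power2_diff power2_sum)
    then have "(f x + g x)\<^sup>2 * m x \<le> (2 * (f x)\<^sup>2 + 2 * (g x)\<^sup>2) * m x"
      using m_pos[of x] by (intro mult_right_mono) auto
    then show ?thesis by (simp add: algebra_simps)
  qed
  show fg: "l2 (\<lambda>x. f x + g x)" unfolding in_l2_def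
    by (rule summable_on_comparison_test[OF sum pt]) (simp add: m_pos less_imp_le)
  have "sq_norm (\<lambda>x. f x + g x) \<le> infsum (\<lambda>x. 2 * ((f x)\<^sup>2 * m x) + 2 * ((g x)\<^sup>2 * m x)) UNIV"
    unfolding sq_norm_def by (rule infsum_mono[OF fg[unfolded in_l2_def] sum pt])
  also have "\<dots> = 2 * sq_norm f + 2 * sq_norm g"
    using assms unfolding sq_norm_def in_l2_def
    by (simp add: infsum_add summable_on_cmult_right infsum_cmult_right')
  finally show "sq_norm (\<lambda>x. f x + g x) \<le> 2 * sq_norm f + 2 * sq_norm g" .
qed

lemma l2_scale: "l2 f \<Longrightarrow> l2 (\<lambda>x. c * f x)"
  and sq_norm_scale: "sq_norm (\<lambda>x. c * f x) = c\<^sup>2 * sq_norm f"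
  unfolding in_l2_def sq_norm_def power_mult_distrib mult.assoc
  by (simp_all add: summable_on_cmult_right infsum_cmult_right')

lemma l2_sum: "finite K \<Longrightarrow> (\<And>k. k \<in> K \<Longrightarrow> l2 (g k)) \<Longrightarrow> l2 (\<lambda>x. \<Sum>k\<in>K. g k x)"
proof (induction K rule: finite_induct)
  case empty
  show ?case by (simp add: in_l2_def)
next
  case (insert k K)
  then show ?case by (simp add: l2_add(1))
qed

lemma summable_b_mult_abs:
  assumes "l2 f" shows "(\<lambda>y. b x y * \<bar>f y\<bar>) summable_on UNIV"
proof (rule summable_on_comparison_test)
  show "(\<lambda>y. 1 / 2 * b x y + Dmax / 2 * ((f y)\<^sup>2 * m y)) summable_on UNIV"
    using assms b_summable[of x] unfolding in_l2_def
    by (intro summable_on_add summable_on_cmult_right)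
  fix y
  show "0 \<le> b x y * \<bar>f y\<bar>" by (simp add: b_nonneg)
  have "\<bar>f y\<bar> \<le> (1 + (f y)\<^sup>2) / 2"
    using zero_le_power2[of "1 - \<bar>f y\<bar>"] by (simp add: power2_diff power2_abs)
  then have "b x y * \<bar>f y\<bar> \<le> b x y * ((1 + (f y)\<^sup>2) / 2)"
    by (rule mult_left_mono) (rule b_nonneg)
  also have "\<dots> \<le> 1 / 2 * b x y + Dmax / 2 * ((f y)\<^sup>2 * m y)"
    using mult_right_mono[OF b_le_Dmax[of x y], of "(f y)\<^sup>2"] by (simp add: algebra_simps)
  finally show "b x y * \<bar>f y\<bar> \<le> 1 / 2 * b x y + Dmax / 2 * ((f y)\<^sup>2 * m y)" .
qed

lemma summable_b_mult:
  assumes "l2 f" shows "(\<lambda>y. b x y * f y) summable_on UNIV"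
proof -
  have "(\<lambda>y. norm (b x y * f y)) summable_on UNIV"
    using summable_b_mult_abs[OF assms, of x] by (simp add: abs_mult b_nonneg)
  then show ?thesis using summable_on_iff_abs_summable_on_real by blast
qed

lemma summable_b_mult_sq:
  assumes "l2 f" shows "(\<lambda>y. b x y * (f y)\<^sup>2) summable_on UNIV"
proof (rule summable_on_comparison_test)
  show "(\<lambda>y. Dmax * ((f y)\<^sup>2 * m y)) summable_on UNIV"
    using assms unfolding in_l2_def by (rule summable_on_cmult_right)
  show "b x y * (f y)\<^sup>2 \<le> Dmax * ((f y)\<^sup>2 * m y)" for y
    using mult_right_mono[OF b_le_Dmax[of x y], of "(f y)\<^sup>2"] by (simp add: algebra_simps)
qed (simp add: b_nonneg)

lemma laplacian_eq:
  assumes "l2 f" shows "H f x = (f x * deg x - adj f x) / m x"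
proof -
  have "infsum (\<lambda>y. b x y * (f x - f y)) UNIV = infsum (\<lambda>y. f x * b x y + - (b x y * f y)) UNIV"
    by (simp add: algebra_simps)
  also have "\<dots> = infsum (\<lambda>y. f x * b x y) UNIV + infsum (\<lambda>y. - (b x y * f y)) UNIV"
    by (rule infsum_add)
       (simp_all add: summable_on_uminus summable_on_cmult_right b_summable summable_b_mult[OF assms])
  also have "\<dots> = f x * deg x - adj f x"
    by (simp add: deg_def adj_def infsum_uminus infsum_cmult_right')
  finally show ?thesis by (simp add: laplacian_def)
qed

lemma adj_sq_le:
  assumes "l2 f" shows "(adj f x)\<^sup>2 \<le> deg x * adj (\<lambda>y. (f y)\<^sup>2) x"
proof -
  let ?a = "adj (\<lambda>y. \<bar>f y\<bar>) x"
  have "\<bar>adj f x\<bar> \<le> ?a"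
    using norm_infsum_bound[of "\<lambda>y. b x y * f y" UNIV] summable_b_mult_abs[OF assms, of x]
    unfolding adj_def by (simp add: abs_mult b_nonneg)
  then have "(adj f x)\<^sup>2 \<le> ?a\<^sup>2"
    using power_mono[of "\<bar>adj f x\<bar>" ?a 2] by simp
  \<comment> \<open>Cauchy-Schwarz, via AM-GM with a free parameter \<open>e\<close>.\<close>
  also have "?a\<^sup>2 \<le> deg x * adj (\<lambda>y. (f y)\<^sup>2) x"
  proof (rule sq_le_mult_if_quadratic_bound)
    show "0 \<le> ?a" "0 \<le> adj (\<lambda>y. (f y)\<^sup>2) x"
      unfolding adj_def by (simp_all add: infsum_nonneg b_nonneg)
    show "0 \<le> deg x" by (rule deg_nonneg)
    fix e :: real assume "e > 0"
    have "2 * ?a * e = infsum (\<lambda>y. 2 * e * (b x y * \<bar>f y\<bar>)) UNIV"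
      unfolding adj_def by (simp add: infsum_cmult_right')
    also have "\<dots> \<le> infsum (\<lambda>y. e\<^sup>2 * b x y + b x y * (f y)\<^sup>2) UNIV"
    proof (rule infsum_mono)
      show "(\<lambda>y. 2 * e * (b x y * \<bar>f y\<bar>)) summable_on UNIV"
        by (rule summable_on_cmult_right[OF summable_b_mult_abs[OF assms]])
      show "(\<lambda>y. e\<^sup>2 * b x y + b x y * (f y)\<^sup>2) summable_on UNIV"
        by (intro summable_on_add summable_on_cmult_right b_summable summable_b_mult_sq[OF assms])
      fix y
      have "2 * e * \<bar>f y\<bar> \<le> e\<^sup>2 + (f y)\<^sup>2"
        using zero_le_power2[of "e - \<bar>f y\<bar>"] by (simp add: power2_diff power2_abs)
      then have "b x y * (2 * e * \<bar>f y\<bar>) \<le> b x y * (e\<^sup>2 + (f y)\<^sup>2)"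
        by (rule mult_left_mono) (rule b_nonneg)
      then show "2 * e * (b x y * \<bar>f y\<bar>) \<le> e\<^sup>2 * b x y + b x y * (f y)\<^sup>2"
        by (simp add: algebra_simps)
    qed
    also have "\<dots> = e\<^sup>2 * deg x + adj (\<lambda>y. (f y)\<^sup>2) x"
      unfolding deg_def adj_def
      by (simp add: infsum_add summable_on_cmult_right b_summable summable_b_mult_sq[OF assms]
          infsum_cmult_right')
    finally show "2 * ?a * e \<le> e\<^sup>2 * deg x + adj (\<lambda>y. (f y)\<^sup>2) x" .
  qed
  finally show ?thesis .
qed

lemma sum_adj_sq_le:
  assumes "l2 f" "finite F"
  shows "(\<Sum>x\<in>F. adj (\<lambda>y. (f y)\<^sup>2) x) \<le> Dmax * sq_norm f"
proof -
  have "((\<lambda>y. \<Sum>x\<in>F. b x y * (f y)\<^sup>2) has_sum (\<Sum>x\<in>F. adj (\<lambda>y. (f y)\<^sup>2) x)) UNIV"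
    unfolding adj_def using summable_b_mult_sq[OF assms(1)]
    by (intro has_sum_finite_sum assms(2)) auto
  then have summable: "(\<lambda>y. \<Sum>x\<in>F. b x y * (f y)\<^sup>2) summable_on UNIV"
    and "(\<Sum>x\<in>F. adj (\<lambda>y. (f y)\<^sup>2) x) = infsum (\<lambda>y. \<Sum>x\<in>F. b x y * (f y)\<^sup>2) UNIV"
    by (auto simp: has_sum_iff)
  note \<open>(\<Sum>x\<in>F. adj (\<lambda>y. (f y)\<^sup>2) x) = _\<close>
  also have "\<dots> \<le> infsum (\<lambda>y. Dmax * ((f y)\<^sup>2 * m y)) UNIV"
  proof (rule infsum_mono[OF summable])
    show "(\<lambda>y. Dmax * ((f y)\<^sup>2 * m y)) summable_on UNIV"
      using assms(1) unfolding in_l2_def by (rule summable_on_cmult_right)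
    fix y
    have "(\<Sum>x\<in>F. b x y) * (f y)\<^sup>2 \<le> (Dmax * m y) * (f y)\<^sup>2"
      using order_trans[OF sum_b_le_deg[OF assms(2)] deg_le_Dmax] by (rule mult_right_mono) simp
    then show "(\<Sum>x\<in>F. b x y * (f y)\<^sup>2) \<le> Dmax * ((f y)\<^sup>2 * m y)"
      by (simp add: algebra_simps sum_distrib_right)
  qed
  also have "\<dots> = Dmax * sq_norm f" by (simp add: sq_norm_def infsum_cmult_right')
  finally show ?thesis .
qed

lemma laplacian_sq_le:
  assumes "l2 f"
  shows "(H f x)\<^sup>2 * m x \<le> 2 * Dmax\<^sup>2 * ((f x)\<^sup>2 * m x) + 2 * Dmax * adj (\<lambda>y. (f y)\<^sup>2) x"
proof -
  have mx: "0 < m x" by (rule m_pos)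
  have Deg: "0 \<le> deg x / m x" "deg x / m x \<le> Dmax" using deg_nonneg mx Deg_le_Dmax by auto
  have "(H f x)\<^sup>2 * m x = (f x * deg x - adj f x)\<^sup>2 / m x"
    using mx by (simp add: laplacian_eq[OF assms] power2_eq_square field_simps)
  also have "\<dots> \<le> (2 * ((f x)\<^sup>2 * (deg x)\<^sup>2) + 2 * (adj f x)\<^sup>2) / m x"
    using zero_le_power2[of "f x * deg x + adj f x"] mx
    by (intro divide_right_mono) (simp_all add: power2_diff power2_sum power_mult_distrib)
  also have "\<dots> = 2 * ((f x)\<^sup>2 * m x) * (deg x / m x)\<^sup>2 + 2 * ((adj f x)\<^sup>2 / m x)"
    using mx by (simp add: power2_eq_square field_simps)
  also have "\<dots> \<le> 2 * ((f x)\<^sup>2 * m x) * Dmax\<^sup>2 + 2 * (Dmax * adj (\<lambda>y. (f y)\<^sup>2) x)"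
  proof (rule add_mono)
    show "2 * ((f x)\<^sup>2 * m x) * (deg x / m x)\<^sup>2 \<le> 2 * ((f x)\<^sup>2 * m x) * Dmax\<^sup>2"
      using Deg mx by (intro mult_left_mono power_mono) auto
    have "(adj f x)\<^sup>2 / m x \<le> deg x / m x * adj (\<lambda>y. (f y)\<^sup>2) x"
      using adj_sq_le[OF assms, of x] mx by (simp add: divide_right_mono)
    also have "\<dots> \<le> Dmax * adj (\<lambda>y. (f y)\<^sup>2) x"
      using Deg by (intro mult_right_mono) (simp_all add: adj_def infsum_nonneg b_nonneg)
    finally show "2 * ((adj f x)\<^sup>2 / m x) \<le> 2 * (Dmax * adj (\<lambda>y. (f y)\<^sup>2) x)" by simp
  qed
  finally show ?thesis by (simp add: algebra_simps)
qed

definition l2_bounded :: "(('a \<Rightarrow> real) \<Rightarrow> ('a \<Rightarrow> real)) \<Rightarrow> real \<Rightarrow> bool" where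
  "l2_bounded A C \<longleftrightarrow> (\<forall>f. l2 f \<longrightarrow> l2 (A f) \<and> sq_norm (A f) \<le> C\<^sup>2 * sq_norm f)"

lemma l2_boundedI:
  "(\<And>f. l2 f \<Longrightarrow> l2 (A f)) \<Longrightarrow> (\<And>f. l2 f \<Longrightarrow> sq_norm (A f) \<le> C\<^sup>2 * sq_norm f) \<Longrightarrow> l2_bounded A C"
  unfolding l2_bounded_def by blast

lemma l2_boundedD:
  assumes "l2_bounded A C" "l2 f"
  shows "l2 (A f)" and "sq_norm (A f) \<le> C\<^sup>2 * sq_norm f"
  using assms unfolding l2_bounded_def by auto

lemma l2_bounded_sqrt_sq_norm_le:
  assumes "l2_bounded A C" "0 \<le> C" "l2 f"
  shows "sqrt (sq_norm (A f)) \<le> C * sqrt (sq_norm f)"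
  using real_sqrt_le_mono[OF l2_boundedD(2)[OF assms(1,3)]] assms(2)
  by (simp add: real_sqrt_mult)

lemma l2_bounded_abs_le:
  assumes "l2_bounded A C" "0 \<le> C" "l2 f"
  shows "\<bar>A f x\<bar> \<le> C * sqrt (sq_norm f) / sqrt (m x)"
  using abs_mult_sqrt_le_l2_norm[OF l2_boundedD(1)[OF assms(1,3)], of x]
    l2_bounded_sqrt_sq_norm_le[OF assms] m_pos[of x]
  by (simp add: pos_le_divide_eq)

lemma l2_bounded_funpow: "l2_bounded A C \<Longrightarrow> l2_bounded (A ^^ n) (C ^ n)"
proof (induction n)
  case (Suc n)
  show ?case
  proof (rule l2_boundedI)
    fix f assume f: "l2 f"
    note IH = l2_boundedD[OF Suc.IH[OF Suc.prems] f]
    show "l2 ((A ^^ Suc n) f)" using l2_boundedD(1)[OF Suc.prems IH(1)] by simp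
    have "sq_norm ((A ^^ Suc n) f) \<le> C\<^sup>2 * sq_norm ((A ^^ n) f)"
      using l2_boundedD(2)[OF Suc.prems IH(1)] by simp
    also have "\<dots> \<le> (C ^ Suc n)\<^sup>2 * sq_norm f"
      using mult_left_mono[OF IH(2), of "C\<^sup>2"] by (simp add: power_mult_distrib power_Suc)
    finally show "sq_norm ((A ^^ Suc n) f) \<le> (C ^ Suc n)\<^sup>2 * sq_norm f" .
  qed
qed (simp add: l2_bounded_def)

lemma l2_bounded_laplacian: "l2_bounded H (2 * Dmax)"
proof -
  have "l2 (H f) \<and> sq_norm (H f) \<le> (2 * Dmax)\<^sup>2 * sq_norm f" if f: "l2 f" for f
  proof -
    have nonneg: "0 \<le> (H f x)\<^sup>2 * m x" for x using m_pos[of x] by simp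
    have sums: "(\<Sum>x\<in>F. (H f x)\<^sup>2 * m x) \<le> 4 * Dmax\<^sup>2 * sq_norm f" if "finite F" for F
    proof -
      have "(\<Sum>x\<in>F. (H f x)\<^sup>2 * m x)
          \<le> 2 * Dmax\<^sup>2 * (\<Sum>x\<in>F. (f x)\<^sup>2 * m x) + 2 * Dmax * (\<Sum>x\<in>F. adj (\<lambda>y. (f y)\<^sup>2) x)"
        using sum_mono[OF laplacian_sq_le[OF f]]
        by (simp add: sum.distrib sum_distrib_left)
      also have "\<dots> \<le> 2 * Dmax\<^sup>2 * sq_norm f + 2 * Dmax * (Dmax * sq_norm f)"
        using sum_le_sq_norm[OF f, of F] sum_adj_sq_le[OF f that] Dmax_nonneg
        by (intro add_mono mult_left_mono) auto
      finally show ?thesis by (simp add: power2_eq_square)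
    qed
    note finite_sums_le_imp_summable_on[OF nonneg sums]
    then show ?thesis by (simp add: in_l2_def sq_norm_def power_mult_distrib)
  qed
  then show ?thesis by (simp add: l2_bounded_def)
qed

lemma adj_add: "l2 f \<Longrightarrow> l2 g \<Longrightarrow> adj (\<lambda>y. f y + g y) x = adj f x + adj g x"
  unfolding adj_def by (simp add: distrib_left infsum_add summable_b_mult)

lemma laplacian_add:
  assumes "l2 f" "l2 g" shows "H (\<lambda>y. f y + g y) x = H f x + H g x"
  using m_pos[of x]
  by (simp add: laplacian_eq assms l2_add(1) adj_add add_divide_distrib[symmetric] algebra_simps)

lemma laplacian_scale: "H (\<lambda>y. c * f y) x = c * H f x"
proof -
  have "(\<lambda>y. b x y * (c * f x - c * f y)) = (\<lambda>y. c * (b x y * (f x - f y)))"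
    by (simp add: algebra_simps)
  then show ?thesis unfolding laplacian_def by (simp add: infsum_cmult_right')
qed

lemma laplacian_sum:
  "finite K \<Longrightarrow> (\<And>k. k \<in> K \<Longrightarrow> l2 (g k)) \<Longrightarrow> H (\<lambda>y. \<Sum>k\<in>K. g k y) x = (\<Sum>k\<in>K. H (g k) x)"
proof (induction K rule: finite_induct)
  case empty
  show ?case by (simp add: laplacian_def)
next
  case (insert k K)
  then show ?case by (simp add: laplacian_add l2_sum)
qed

definition shifted_laplacian :: "('a \<Rightarrow> real) \<Rightarrow> 'a \<Rightarrow> real" where
  "shifted_laplacian f = (\<lambda>x. Dmax * f x - H f x)"

lemma l2_bounded_shifted_laplacian: "l2_bounded shifted_laplacian (4 * Dmax)"
proof (rule l2_boundedI)
  fix f assume f: "l2 f"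
  note Hf = l2_boundedD[OF l2_bounded_laplacian f]
  have eq: "shifted_laplacian f = (\<lambda>x. Dmax * f x + (-1) * H f x)"
    unfolding shifted_laplacian_def by simp
  show "l2 (shifted_laplacian f)" unfolding eq by (intro l2_add(1) l2_scale f Hf(1))
  have "sq_norm (shifted_laplacian f) \<le> 2 * (Dmax\<^sup>2 * sq_norm f) + 2 * sq_norm (H f)"
    unfolding eq using l2_add(2)[OF l2_scale[OF f] l2_scale[OF Hf(1)], of Dmax "-1"]
      sq_norm_scale[of Dmax f] sq_norm_scale[of "-1" "H f"]
    by simp
  also have "\<dots> \<le> 16 * (Dmax\<^sup>2 * sq_norm f)"
  proof -
    have "sq_norm (H f) \<le> 4 * (Dmax\<^sup>2 * sq_norm f)"
      using Hf(2) by (simp add: power_mult_distrib mult.assoc)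
    moreover have "0 \<le> Dmax\<^sup>2 * sq_norm f" by (simp add: sq_norm_nonneg)
    ultimately show ?thesis by linarith
  qed
  also have "\<dots> = (4 * Dmax)\<^sup>2 * sq_norm f" by (simp add: power_mult_distrib)
  finally show "sq_norm (shifted_laplacian f) \<le> (4 * Dmax)\<^sup>2 * sq_norm f" .
qed

lemma shifted_laplacian_nonneg:
  assumes "l2 f" "\<And>x. 0 \<le> f x" shows "0 \<le> shifted_laplacian f x"
proof -
  have "shifted_laplacian f x = (Dmax - deg x / m x) * f x + adj f x / m x"
    unfolding shifted_laplacian_def using m_pos[of x]
    by (simp add: laplacian_eq[OF assms(1)] field_simps)
  moreover have "0 \<le> adj f x" unfolding adj_def by (simp add: infsum_nonneg b_nonneg assms(2))
  ultimately show ?thesis using Deg_le_Dmax[of x] m_pos[of x] assms(2)[of x] by simp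
qed

lemma shifted_laplacian_funpow_nonneg:
  assumes "l2 f" "\<And>x. 0 \<le> f x" shows "0 \<le> (shifted_laplacian ^^ k) f x"
proof (induction k arbitrary: x)
  case (Suc k)
  have "l2 ((shifted_laplacian ^^ k) f)"
    using l2_boundedD(1)[OF l2_bounded_funpow[OF l2_bounded_shifted_laplacian] assms(1)] .
  then show ?case using shifted_laplacian_nonneg Suc by simp
qed (use assms in simp)

lemma laplacian_funpow_binomial:
  assumes "l2 f"
  shows "(H ^^ n) f x
    = (\<Sum>k\<le>n. real (n choose k) * Dmax ^ (n - k) * (-1) ^ k * (shifted_laplacian ^^ k) f x)"
proof (induction n arbitrary: x)
  case (Suc n)
  let ?P = "\<lambda>k. (shifted_laplacian ^^ k) f"
  let ?c = "\<lambda>k. real (n choose k) * Dmax ^ (n - k) * (-1) ^ k"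
  have l2P: "l2 (?P k)" for k
    using l2_boundedD(1)[OF l2_bounded_funpow[OF l2_bounded_shifted_laplacian] assms] .
  have "(H ^^ n) f = (\<lambda>y. \<Sum>k\<le>n. ?c k * ?P k y)"
    using Suc.IH by (simp add: fun_eq_iff)
  then have "(H ^^ Suc n) f x = H (\<lambda>y. \<Sum>k\<le>n. ?c k * ?P k y) x"
    by simp
  also have "\<dots> = (\<Sum>k\<le>n. ?c k * H (?P k) x)"
    by (simp add: laplacian_sum l2_scale l2P laplacian_scale)
  also have "\<dots> = (\<Sum>k\<le>n. ?c k * (Dmax * ?P k x - ?P (Suc k) x))"
    by (simp add: shifted_laplacian_def)
  also have "\<dots> = (\<Sum>k\<le>Suc n. real (Suc n choose k) * Dmax ^ (Suc n - k) * (-1) ^ k * ?P k x)"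
    by (rule pascal_sum_shift)
  finally show ?case .
qed simp

lemma laplacian_funpow_local:
  assumes "\<And>y k. k \<le> n \<Longrightarrow> graph_path b x y k \<Longrightarrow> g y = 0"
  shows "(H ^^ n) g x = 0"
  using assms
proof (induction n arbitrary: g)
  case 0
  have "graph_path b x x 0" unfolding graph_path_def by auto
  then show ?case using 0 by simp
next
  case (Suc n)
  have "(H ^^ n) (H g) x = 0"
  proof (rule Suc.IH)
    fix y k assume k: "k \<le> n" and p: "graph_path b x y k"
    have zero: "b y z * (g y - g z) = 0" for z
    proof (cases "b y z > 0")
      case True
      then have "graph_path b x z (Suc k)" by (rule graph_path_snoc[OF p])
      then show ?thesis using Suc.prems[of "Suc k" z] Suc.prems[of k y] k p by simp
    next
      case False
      then show ?thesis using b_nonneg[of y z] by simp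
    qed
    show "H g y = 0" unfolding laplacian_def zero by simp
  qed
  moreover have "(H ^^ Suc n) g = (H ^^ n) (H g)" by (simp only: funpow_Suc_right comp_def)
  ultimately show ?case by simp
qed

section \<open>The heat semigroup\<close>

lemma laplacian_funpow_abs_le:
  "l2 g \<Longrightarrow> \<bar>(H ^^ n) g x\<bar> \<le> (2 * Dmax) ^ n * sqrt (sq_norm g) / sqrt (m x)"
  by (rule l2_bounded_abs_le[OF l2_bounded_funpow[OF l2_bounded_laplacian]]) (simp_all add: Dmax_nonneg)

lemma semigroup_term_abs_le:
  assumes g: "l2 g" and t: "0 \<le> t" "t \<le> T"
  shows "\<bar>(-t) ^ n / fact n * (H ^^ n) g x\<bar>
    \<le> (2 * Dmax * T) ^ n / fact n * (sqrt (sq_norm g) / sqrt (m x))"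
proof -
  have "\<bar>(-t) ^ n / fact n * (H ^^ n) g x\<bar> = t ^ n / fact n * \<bar>(H ^^ n) g x\<bar>"
    using t by (simp add: abs_mult power_abs)
  also have "\<dots> \<le> T ^ n / fact n * ((2 * Dmax) ^ n * sqrt (sq_norm g) / sqrt (m x))"
    using laplacian_funpow_abs_le[OF g, of n x] t
    by (intro mult_mono divide_right_mono power_mono) auto
  finally show ?thesis by (simp add: power_mult_distrib mult_ac)
qed

lemma semigroup_series_summable:
  assumes "l2 g" "0 \<le> t"
  shows "summable (\<lambda>n. norm ((-t) ^ n / fact n * (H ^^ n) g x))"
proof (rule summable_comparison_test'[where N = 0, OF summable_mult2[OF summable_exp_series_real]])
  fix n
  show "norm (norm ((-t) ^ n / fact n * (H ^^ n) g x))
    \<le> (2 * Dmax * t) ^ n / fact n * (sqrt (sq_norm g) / sqrt (m x))"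
    using semigroup_term_abs_le[OF assms order_refl] by simp
qed

lemma semigroup_abs_le_exp_tail:
  assumes g: "l2 g" and t: "0 \<le> t" "t \<le> T" and vanish: "\<And>j. j < n \<Longrightarrow> (H ^^ j) g x = 0"
  shows "\<bar>semigroup b m t g x\<bar> \<le> exp_tail (2 * Dmax * T) n * (sqrt (sq_norm g) / sqrt (m x))"
proof -
  let ?a = "\<lambda>k. (-t) ^ k / fact k * (H ^^ k) g x"
  let ?E = "\<lambda>k. (2 * Dmax * T) ^ k / fact k"
  have summable: "summable (\<lambda>k. norm (?a (k + n)))"
    using summable_ignore_initial_segment[OF semigroup_series_summable[OF g t(1)]] by simp
  have "semigroup b m t g x = (\<Sum>k. ?a (k + n)) + (\<Sum>i<n. ?a i)"
    unfolding semigroup_def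
    by (rule suminf_split_initial_segment[OF summable_norm_cancel[OF semigroup_series_summable[OF g t(1)]]])
  then have "\<bar>semigroup b m t g x\<bar> = \<bar>\<Sum>k. ?a (k + n)\<bar>" using vanish by simp
  also have "\<dots> \<le> (\<Sum>k. norm (?a (k + n)))" using summable_norm[OF summable] by simp
  also have "\<dots> \<le> (\<Sum>k. ?E (k + n) * (sqrt (sq_norm g) / sqrt (m x)))"
    by (rule suminf_le[OF _ summable
          summable_mult2[OF summable_ignore_initial_segment[OF summable_exp_series_real]]])
       (use semigroup_term_abs_le[OF g t] in simp)
  also have "\<dots> = exp_tail (2 * Dmax * T) n * (sqrt (sq_norm g) / sqrt (m x))"
    unfolding exp_tail_def
    by (rule suminf_mult2[symmetric, OF summable_ignore_initial_segment[OF summable_exp_series_real]])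
  finally show ?thesis .
qed

lemma summable_shifted_laplacian_series:
  assumes f: "l2 f" and t: "0 \<le> t"
  shows "summable (\<lambda>k. norm (t ^ k / fact k * (shifted_laplacian ^^ k) f x))"
proof (rule summable_comparison_test'[where N = 0, OF summable_mult2[OF summable_exp_series_real]])
  fix k
  let ?q = "(shifted_laplacian ^^ k) f x"
  have q: "\<bar>?q\<bar> \<le> (4 * Dmax) ^ k * sqrt (sq_norm f) / sqrt (m x)"
    by (rule l2_bounded_abs_le[OF l2_bounded_funpow[OF l2_bounded_shifted_laplacian]])
       (simp_all add: Dmax_nonneg f)
  have "norm (norm (t ^ k / fact k * ?q)) = t ^ k / fact k * \<bar>?q\<bar>" using t by (simp add: abs_mult)
  also have "\<dots> \<le> t ^ k / fact k * ((4 * Dmax) ^ k * sqrt (sq_norm f) / sqrt (m x))"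
    using q t by (intro mult_left_mono) auto
  finally show "norm (norm (t ^ k / fact k * ?q))
    \<le> (4 * Dmax * t) ^ k / fact k * (sqrt (sq_norm f) / sqrt (m x))"
    by (simp add: power_mult_distrib mult_ac)
qed

lemma semigroup_ge_exp:
  assumes f: "l2 f" "\<And>x. 0 \<le> f x" and t: "0 \<le> t"
  shows "exp (- t * Dmax) * f x \<le> semigroup b m t f x"
proof -
  let ?q = "\<lambda>k. (shifted_laplacian ^^ k) f x"
  let ?a = "\<lambda>k. t ^ k / fact k * ?q k"
  let ?b = "\<lambda>j. (- t * Dmax) ^ j / fact j"
  have a_nonneg: "0 \<le> ?a k" for k using shifted_laplacian_funpow_nonneg[OF f] t by simp
  have summable_a: "summable (\<lambda>k. norm (?a k))"
    by (rule summable_shifted_laplacian_series[OF f(1) t])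
  have summable_b: "summable (\<lambda>k. norm (?b k))"
    using summable_exp_series_real[of "\<bar>- t * Dmax\<bar>"] by (simp add: power_abs)
  have "semigroup b m t f x
      = (\<Sum>n. (-t) ^ n / fact n
          * (\<Sum>k\<le>n. real (n choose k) * Dmax ^ (n - k) * (-1) ^ k * ?q k))"
    unfolding semigroup_def by (simp add: laplacian_funpow_binomial[OF f(1)])
  also have "\<dots> = (\<Sum>n. \<Sum>k\<le>n. ?a k * ?b (n - k))"
    unfolding sum_distrib_left
    by (intro suminf_cong sum.cong refl exp_series_binomial_term) simp
  also have "\<dots> = suminf ?a * suminf ?b"
    by (rule Cauchy_product[OF summable_a summable_b, symmetric])
  also have "suminf ?b = exp (- t * Dmax)"
    by (rule sums_unique[symmetric, OF exp_sums_real])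
  finally have "semigroup b m t f x = suminf ?a * exp (- t * Dmax)" .
  moreover have "f x \<le> suminf ?a"
    using sum_le_suminf[OF summable_norm_cancel[OF summable_a], of "{0}"] a_nonneg by simp
  ultimately show ?thesis by (simp add: mult.commute)
qed

lemma semigroup_pairing_le:
  assumes g: "l2 g" and t: "0 \<le> t" "t \<le> T" and F: "finite F" and w: "L2_set w F \<le> 1"
  shows "(\<Sum>y\<in>F. w y * (sqrt (m y) * semigroup b m t g y)) \<le> exp (2 * Dmax * T) * sqrt (sq_norm g)"
proof -
  let ?h = "\<lambda>n. (H ^^ n) g"
  let ?a = "\<lambda>y n. (-t) ^ n / fact n * (w y * (sqrt (m y) * ?h n y))"
  have series: "summable (\<lambda>n. (-t) ^ n / fact n * ?h n y)" for y
    by (rule summable_norm_cancel[OF semigroup_series_summable[OF g t(1)]])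
  have summable: "summable (?a y)" for y
    using summable_mult[OF series, of "w y * sqrt (m y)" y] by (simp add: mult_ac)
  have "(\<Sum>y\<in>F. w y * (sqrt (m y) * semigroup b m t g y)) = (\<Sum>y\<in>F. \<Sum>n. ?a y n)"
    unfolding semigroup_def using suminf_mult[OF series, of "w _ * sqrt (m _)"]
    by (intro sum.cong) (simp_all add: mult_ac)
  also have "\<dots> = (\<Sum>n. \<Sum>y\<in>F. ?a y n)" by (rule suminf_sum[symmetric]) (rule summable)
  also have "\<dots> \<le> (\<Sum>n. (2 * Dmax * T) ^ n / fact n * sqrt (sq_norm g))"
  proof (rule suminf_le)
    show "summable (\<lambda>n. \<Sum>y\<in>F. ?a y n)" by (intro summable_sum summable)
    show "summable (\<lambda>n. (2 * Dmax * T) ^ n / fact n * sqrt (sq_norm g))"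
      by (rule summable_mult2[OF summable_exp_series_real])
    fix n
    let ?p = "\<Sum>y\<in>F. w y * (sqrt (m y) * ?h n y)"
    have "\<bar>?p\<bar> \<le> sqrt (sq_norm (?h n))"
      by (rule abs_weighted_pairing_le[OF l2_boundedD(1)[OF l2_bounded_funpow[OF l2_bounded_laplacian] g] w])
    also have "\<dots> \<le> (2 * Dmax) ^ n * sqrt (sq_norm g)"
      using l2_bounded_sqrt_sq_norm_le[OF l2_bounded_funpow[OF l2_bounded_laplacian] _ g] Dmax_nonneg
      by simp
    finally have p: "\<bar>?p\<bar> \<le> (2 * Dmax) ^ n * sqrt (sq_norm g)" .
    have "(\<Sum>y\<in>F. ?a y n) \<le> \<bar>(-t) ^ n / fact n * ?p\<bar>"
      by (simp add: sum_distrib_left)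
    also have "\<dots> = t ^ n / fact n * \<bar>?p\<bar>" using t by (simp add: abs_mult power_abs)
    also have "\<dots> \<le> T ^ n / fact n * ((2 * Dmax) ^ n * sqrt (sq_norm g))"
      using p t Dmax_nonneg by (intro mult_mono divide_right_mono power_mono) auto
    finally show "(\<Sum>y\<in>F. ?a y n) \<le> (2 * Dmax * T) ^ n / fact n * sqrt (sq_norm g)"
      by (simp add: power_mult_distrib mult_ac)
  qed
  also have "\<dots> = exp (2 * Dmax * T) * sqrt (sq_norm g)"
    by (rule sums_unique[symmetric]) (rule sums_mult2[OF exp_sums_real])
  finally show ?thesis .
qed

lemma semigroup_L2_set_le:
  assumes "l2 g" "0 \<le> t" "t \<le> T" "finite F"
  shows "L2_set (\<lambda>y. sqrt (m y) * semigroup b m t g y) F \<le> exp (2 * Dmax * T) * sqrt (sq_norm g)"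
  by (rule L2_set_le_if_pairings_le) (simp_all add: semigroup_pairing_le assms sq_norm_nonneg)

section \<open>Controllability\<close>

definition duhamel :: "real \<Rightarrow> (real \<Rightarrow> 'a \<Rightarrow> real) \<Rightarrow> 'a \<Rightarrow> real" where
  "duhamel T g y = (LINT \<tau>:{0<..<T}|lborel. semigroup b m (T - \<tau>) (g \<tau>) y)"

lemma mild_solution_eq:
  "mild_solution b m D f0 u T = (\<lambda>y. semigroup b m T f0 y + duhamel T (\<lambda>\<tau>. ext_zero D (u \<tau>)) y)"
  by (simp add: mild_solution_def duhamel_def)

lemma duhamel_L2_set_le:
  assumes \<nu>: "set_integrable lborel {0<..<T} \<nu>"
    and g: "\<And>\<tau>. \<tau> \<in> {0<..<T} \<Longrightarrow> l2 (g \<tau>)"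
      "\<And>\<tau>. \<tau> \<in> {0<..<T} \<Longrightarrow> sqrt (sq_norm (g \<tau>)) \<le> \<nu> \<tau>"
    and F: "finite F"
  shows "L2_set (\<lambda>y. sqrt (m y) * duhamel T g y) F
    \<le> exp (2 * Dmax * T) * (LINT \<tau>:{0<..<T}|lborel. \<nu> \<tau>)"
proof (rule L2_set_le_if_pairings_le)
  let ?S = "{0<..<T} :: real set"
  let ?h = "\<lambda>\<tau> y. indicator ?S \<tau> * semigroup b m (T - \<tau>) (g \<tau>) y"
  let ?C = "exp (2 * Dmax * T)"
  have "0 \<le> indicator ?S \<tau> * \<nu> \<tau>" for \<tau>
    using order_trans[OF real_sqrt_ge_zero[OF sq_norm_nonneg] g(2)] by (simp add: indicator_def)
  then show "0 \<le> ?C * (LINT \<tau>:?S|lborel. \<nu> \<tau>)"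
    by (simp add: set_lebesgue_integral_def Bochner_Integration.integral_nonneg)
  fix w assume w: "L2_set w F \<le> 1"
  have "(\<Sum>y\<in>F. w y * (sqrt (m y) * duhamel T g y))
      = (\<Sum>y\<in>F. integral\<^sup>L lborel (\<lambda>\<tau>. w y * sqrt (m y) * ?h \<tau> y))"
    by (simp add: duhamel_def set_lebesgue_integral_def mult.assoc)
  also have "\<dots> \<le> integral\<^sup>L lborel (\<lambda>\<tau>. ?C * (indicator ?S \<tau> * \<nu> \<tau>))"
  proof (rule sum_integral_le_integral[OF F])
    show "integrable lborel (\<lambda>\<tau>. ?C * (indicator ?S \<tau> * \<nu> \<tau>))"
      using \<nu> by (simp add: set_integrable_def)
    fix G :: "'a set" and \<tau> :: real assume "G \<subseteq> F"
    then have G: "finite G" "L2_set w G \<le> 1"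
      using F w sum_mono2[OF F, of G "\<lambda>y. (w y)\<^sup>2"] by (auto simp: L2_set_def intro: finite_subset)
    show "(\<Sum>y\<in>G. w y * sqrt (m y) * ?h \<tau> y) \<le> ?C * (indicator ?S \<tau> * \<nu> \<tau>)"
    proof (cases "\<tau> \<in> ?S")
      case True
      then have "(\<Sum>y\<in>G. w y * sqrt (m y) * ?h \<tau> y)
          = (\<Sum>y\<in>G. w y * (sqrt (m y) * semigroup b m (T - \<tau>) (g \<tau>) y))"
        by (simp add: mult.assoc)
      also have "\<dots> \<le> ?C * sqrt (sq_norm (g \<tau>))"
        using True by (intro semigroup_pairing_le g G) auto
      also have "\<dots> \<le> ?C * \<nu> \<tau>" using g(2)[OF True] by simp
      finally show ?thesis using True by simp
    qed simp
  qed
  also have "\<dots> = ?C * (LINT \<tau>:?S|lborel. \<nu> \<tau>)"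
    by (simp add: set_lebesgue_integral_def)
  finally show "(\<Sum>y\<in>F. w y * (sqrt (m y) * duhamel T g y)) \<le> ?C * (LINT \<tau>:?S|lborel. \<nu> \<tau>)" .
qed

lemma duhamel_abs_le_exp_tail:
  assumes T: "0 \<le> T" and \<nu>: "set_integrable lborel {0<..<T} \<nu>"
    and g: "\<And>\<tau>. \<tau> \<in> {0<..<T} \<Longrightarrow> l2 (g \<tau>)"
      "\<And>\<tau>. \<tau> \<in> {0<..<T} \<Longrightarrow> sqrt (sq_norm (g \<tau>)) \<le> \<nu> \<tau>"
    and vanish: "\<And>\<tau> j. \<tau> \<in> {0<..<T} \<Longrightarrow> j < n \<Longrightarrow> (H ^^ j) (g \<tau>) x = 0"
  shows "\<bar>duhamel T g x\<bar>
    \<le> exp_tail (2 * Dmax * T) n / sqrt (m x) * (LINT \<tau>:{0<..<T}|lborel. \<nu> \<tau>)"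
proof -
  let ?S = "{0<..<T} :: real set"
  let ?c = "exp_tail (2 * Dmax * T) n / sqrt (m x)"
  have c: "0 \<le> ?c" using exp_tail_nonneg[of "2 * Dmax * T" n] T Dmax_nonneg m_pos[of x] by simp
  have \<nu>_nonneg: "0 \<le> indicator ?S \<tau> * \<nu> \<tau>" for \<tau>
    using order_trans[OF real_sqrt_ge_zero[OF sq_norm_nonneg] g(2)] by (simp add: indicator_def)
  have pt: "\<bar>semigroup b m (T - \<tau>) (g \<tau>) x\<bar> \<le> ?c * \<nu> \<tau>" if "\<tau> \<in> ?S" for \<tau>
  proof -
    have "\<bar>semigroup b m (T - \<tau>) (g \<tau>) x\<bar>
        \<le> exp_tail (2 * Dmax * T) n * (sqrt (sq_norm (g \<tau>)) / sqrt (m x))"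
      using that by (intro semigroup_abs_le_exp_tail g(1) vanish) auto
    also have "\<dots> \<le> exp_tail (2 * Dmax * T) n * (\<nu> \<tau> / sqrt (m x))"
      using g(2)[OF that] exp_tail_nonneg T Dmax_nonneg m_pos[of x]
      by (intro mult_left_mono divide_right_mono) auto
    finally show ?thesis by simp
  qed
  show ?thesis
  proof (cases "integrable lborel (\<lambda>\<tau>. indicator ?S \<tau> * semigroup b m (T - \<tau>) (g \<tau>) x)")
    case True
    have "\<bar>duhamel T g x\<bar>
        = \<bar>integral\<^sup>L lborel (\<lambda>\<tau>. indicator ?S \<tau> * semigroup b m (T - \<tau>) (g \<tau>) x)\<bar>"
      by (simp add: duhamel_def set_lebesgue_integral_def)
    also have "\<dots> \<le> integral\<^sup>L lborel (\<lambda>\<tau>. ?c * (indicator ?S \<tau> * \<nu> \<tau>))"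
      by (rule integral_abs_bound_integral[OF True])
         (use \<nu> pt in \<open>auto simp: set_integrable_def indicator_def\<close>)
    finally show ?thesis by (simp add: set_lebesgue_integral_def)
  next
    case False
    then have "duhamel T g x = 0"
      by (simp add: duhamel_def set_lebesgue_integral_def not_integrable_integral_eq)
    moreover have "0 \<le> (LINT \<tau>:?S|lborel. \<nu> \<tau>)"
      using \<nu>_nonneg by (simp add: set_lebesgue_integral_def Bochner_Integration.integral_nonneg)
    ultimately show ?thesis using mult_nonneg_nonneg[OF c] by simp
  qed
qed

definition unit_delta :: "'a \<Rightarrow> 'a \<Rightarrow> real" where
  "unit_delta x = (\<lambda>y. if y = x then 1 / sqrt (m x) else 0)"

lemma unit_delta_sq: "(\<lambda>y. (unit_delta x y)\<^sup>2 * m y) = (\<lambda>y. if y = x then 1 else 0)"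
  using m_pos[of x] by (auto simp: unit_delta_def power_divide)

lemma l2_unit_delta: "l2 (unit_delta x)"
  unfolding in_l2_def unit_delta_sq by (subst summable_on_cong_neutral[where T = "{x}"]) auto

lemma sq_norm_unit_delta: "sq_norm (unit_delta x) = 1"
  unfolding sq_norm_def unit_delta_sq
  by (subst infsum_cong_neutral[where T = "{x}" and g = "\<lambda>_. 1"]) auto

lemma unit_delta_nonneg: "0 \<le> unit_delta x y"
  using m_pos[of x] by (simp add: unit_delta_def)

lemma ext_zero_sq: "(\<lambda>y. (ext_zero D g y)\<^sup>2 * m y) = (\<lambda>y. if y \<in> D then (g y)\<^sup>2 * m y else 0)"
  by (auto simp: ext_zero_def)

lemma l2_ext_zero: "in_l2 m D g \<Longrightarrow> l2 (ext_zero D g)"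
  unfolding in_l2_def ext_zero_sq
  by (subst summable_on_cong_neutral[where T = D and g = "\<lambda>y. (g y)\<^sup>2 * m y"]) auto

lemma sqrt_sq_norm_ext_zero: "sqrt (sq_norm (ext_zero D g)) = l2_norm m D g"
  unfolding sq_norm_def l2_norm_def ext_zero_sq
  by (subst infsum_cong_neutral[where T = D and g = "\<lambda>y. (g y)\<^sup>2 * m y"]) auto

lemma laplacian_funpow_ext_zero_far:
  assumes far: "\<And>y. y \<in> D \<Longrightarrow> n < d_comb b y x" and "j \<le> n"
  shows "(H ^^ j) (ext_zero D g) x = 0"
proof (rule laplacian_funpow_local)
  fix y k assume "k \<le> j" "graph_path b x y k"
  then have "d_comb b y x \<le> n"
    using d_comb_le[OF graph_path_sym[OF b_sym]] \<open>j \<le> n\<close> by fastforce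
  then show "ext_zero D g y = 0" using far by (force simp: ext_zero_def)
qed

lemma l2_ext_zero_control:
  assumes "Lr_control m D T r u K" "\<tau> \<in> {0<..<T}"
  shows "l2 (ext_zero D (u \<tau>))"
  using assms by (simp add: Lr_control_def l2_ext_zero)

lemma l2_mild_solution:
  assumes f0: "l2 f0" and T: "0 < T" and r: "1 \<le> r" and u: "Lr_control m D T r u K"
  shows "l2 (mild_solution b m D f0 u T)"
proof (rule l2_if_L2_set_le)
  let ?g = "\<lambda>\<tau>. ext_zero D (u \<tau>)"
  let ?C = "exp (2 * Dmax * T)"
  note \<nu> = Lr_control_norm_integral_le[OF u T r less_imp_le[OF m_pos]]
  fix F :: "'a set" assume F: "finite F"
  have "L2_set (\<lambda>y. sqrt (m y) * mild_solution b m D f0 u T y) F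
      \<le> L2_set (\<lambda>y. sqrt (m y) * semigroup b m T f0 y) F + L2_set (\<lambda>y. sqrt (m y) * duhamel T ?g y) F"
    unfolding mild_solution_eq distrib_left by (rule L2_set_triangle_ineq)
  also have "\<dots> \<le> ?C * sqrt (sq_norm f0) + ?C * (T + K powr r)"
  proof (rule add_mono)
    show "L2_set (\<lambda>y. sqrt (m y) * semigroup b m T f0 y) F \<le> ?C * sqrt (sq_norm f0)"
      using T by (intro semigroup_L2_set_le f0 F) auto
    have "L2_set (\<lambda>y. sqrt (m y) * duhamel T ?g y) F
        \<le> ?C * (LINT \<tau>:{0<..<T}|lborel. l2_norm m D (u \<tau>))"
      by (intro duhamel_L2_set_le \<nu>(1) l2_ext_zero_control[OF u] F)
         (simp_all add: sqrt_sq_norm_ext_zero)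
    also have "\<dots> \<le> ?C * (T + K powr r)" using \<nu>(2) by simp
    finally show "L2_set (\<lambda>y. sqrt (m y) * duhamel T ?g y) F \<le> ?C * (T + K powr r)" .
  qed
  finally show "L2_set (\<lambda>y. sqrt (m y) * mild_solution b m D f0 u T y) F
    \<le> ?C * sqrt (sq_norm f0) + ?C * (T + K powr r)" .
qed

lemma mild_solution_unit_delta_ge:
  assumes T: "0 < T" and r: "1 \<le> r" and far: "\<And>y. y \<in> D \<Longrightarrow> n < d_comb b y x"
    and u: "Lr_control m D T r u K"
  shows "exp (- Dmax * T) / sqrt (m x) - exp_tail (2 * Dmax * T) n / sqrt (m x) * (T + K powr r)
    \<le> mild_solution b m D (unit_delta x) u T x"
proof -
  let ?g = "\<lambda>\<tau>. ext_zero D (u \<tau>)"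
  let ?c = "exp_tail (2 * Dmax * T) n / sqrt (m x)"
  note \<nu> = Lr_control_norm_integral_le[OF u T r less_imp_le[OF m_pos]]
  have "exp (- T * Dmax) * unit_delta x x \<le> semigroup b m T (unit_delta x) x"
    using T by (intro semigroup_ge_exp l2_unit_delta unit_delta_nonneg) simp
  then have free: "exp (- Dmax * T) / sqrt (m x) \<le> semigroup b m T (unit_delta x) x"
    by (simp add: unit_delta_def mult.commute)
  have "\<bar>duhamel T ?g x\<bar> \<le> ?c * (LINT \<tau>:{0<..<T}|lborel. l2_norm m D (u \<tau>))"
    using T
    by (intro duhamel_abs_le_exp_tail \<nu>(1) l2_ext_zero_control[OF u] laplacian_funpow_ext_zero_far[OF far])
       (simp_all add: sqrt_sq_norm_ext_zero)
  also have "\<dots> \<le> ?c * (T + K powr r)"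
    using \<nu>(2) exp_tail_nonneg[of "2 * Dmax * T" n] T Dmax_nonneg m_pos[of x]
    by (intro mult_left_mono) auto
  finally have control: "\<bar>duhamel T ?g x\<bar> \<le> ?c * (T + K powr r)" .
  show ?thesis using free control by (auto simp: mild_solution_eq abs_le_iff)
qed

lemma l2_norm_mild_solution_ge:
  assumes T: "0 < T" and r: "1 \<le> r" and far: "\<And>y. y \<in> D \<Longrightarrow> n < d_comb b y x"
    and u: "Lr_control m D T r u K"
  shows "exp (- Dmax * T) - exp_tail (2 * Dmax * T) n * (T + K powr r)
    \<le> l2_norm m UNIV (mild_solution b m D (unit_delta x) u T)"
proof -
  let ?s = "mild_solution b m D (unit_delta x) u T"
  let ?M = "T + K powr r"
  let ?tail = "exp_tail (2 * Dmax * T) n"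
  have "exp (- Dmax * T) - ?tail * ?M
      = (exp (- Dmax * T) / sqrt (m x) - ?tail / sqrt (m x) * ?M) * sqrt (m x)"
    using m_pos[of x] by (simp add: field_simps)
  also have "\<dots> \<le> \<bar>?s x\<bar> * sqrt (m x)"
    using mild_solution_unit_delta_ge[OF assms] m_pos[of x] by (intro mult_right_mono) auto
  also have "\<dots> \<le> l2_norm m UNIV ?s"
    using abs_mult_sqrt_le_l2_norm[OF l2_mild_solution[OF l2_unit_delta T r u]]
    by (simp add: l2_norm_eq)
  finally show ?thesis .
qed

theorem controllable_imp_comb_rel_dense:
  assumes T: "0 < T" and r: "1 \<le> r" and \<alpha>: "\<alpha> < exp (- Dmax * T)"
    and ctrl: "controllable b m D \<alpha> T r K"
  shows "comb_rel_dense b D"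
proof (rule ccontr)
  assume not_dense: "\<not> comb_rel_dense b D"
  have "(\<lambda>n. exp_tail (2 * Dmax * T) n * (T + K powr r)) \<longlonglongrightarrow> 0"
    by (rule tendsto_mult_left_zero[OF exp_tail_tendsto_zero])
  then obtain n where n: "exp_tail (2 * Dmax * T) n * (T + K powr r) < exp (- Dmax * T) - \<alpha>"
    using \<alpha> order_tendstoD(2)[of _ 0 sequentially "exp (- Dmax * T) - \<alpha>"]
    by (auto simp: eventually_sequentially)
  obtain x where far: "\<And>y. y \<in> D \<Longrightarrow> n < d_comb b y x"
    using not_comb_rel_dense_imp_far_vertex[OF not_dense] by blast
  have "l2_norm m UNIV (unit_delta x) = 1" by (simp add: l2_norm_eq sq_norm_unit_delta)
  moreover have "\<exists>u. Lr_control m D T r u (K * l2_norm m UNIV (unit_delta x)) \<and>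
      l2_norm m UNIV (mild_solution b m D (unit_delta x) u T) \<le> \<alpha> * l2_norm m UNIV (unit_delta x)"
    using ctrl l2_unit_delta unfolding controllable_def by blast
  ultimately obtain u where u: "Lr_control m D T r u K"
    and small: "l2_norm m UNIV (mild_solution b m D (unit_delta x) u T) \<le> \<alpha>"
    by auto
  show False using l2_norm_mild_solution_ge[OF T r far u] n small by linarith
qed

end

theorem mainTheorem5:
  fixes b :: "'a::countable \<Rightarrow> 'a \<Rightarrow> real" and m :: "'a \<Rightarrow> real"
    and D :: "'a set" and T r K \<alpha> :: real
  assumes "weighted_graph b m"
    and "graph_connected b"
    and "bounded_degree b m"
    and "bounded_measure m"
    and "T > 0" and "r \<ge> 1" and "K \<ge> 0"
    and "0 \<le> \<alpha>" and "\<alpha> < exp (- D_max b m * T)"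
    and "controllable b m D \<alpha> T r K"
  shows "comb_rel_dense b D"
proof -
  interpret bounded_weighted_graph b m using assms(1,3) by unfold_locales
  show ?thesis using assms(5,6,9,10) by (rule controllable_imp_comb_rel_dense)
qed

end
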